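(* Let $\mathcal{H}$ be a finite-dimensional Hilbert space, $H$ a Hermitian operator (Hamiltonian) on $\mathcal{H}$ with at most three distinct eigenvalues, $\omega>0$, and $X,Y$ Hermitian operators on $\mathcal{H}$ such that the Heisenberg-picture operators $X(t)\coloneqq e^{iHt/\hbar}Xe^{-iHt/\hbar}$, $Y(t)\coloneqq e^{iHt/\hbar}Ye^{-iHt/\hbar}$ satisfy, for all real $t$, $$X(t)=\cos(\omega t)X+\sin(\omega t)Y,\qquad Y(t)=\cos(\omega t)Y-\sin(\omega t)X.$$ Then for every density operator $\rho$ on $\mathcal{H}$, $$\frac13\sum_{k=0}^2\operatorname{tr}\!\Big[\Theta\big(X(\tfrac{2\pi k}{3\omega})\big)\rho\Big]=\frac12.$$ In particular, this holds whenever $\dim\mathcal{H}\le 3$.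
   Context: For a Hermitian operator $A$, $\Theta(A)$ denotes the spectral function of $A$ with $\Theta(a)=1$ for $a>0$, $\Theta(a)=0$ for $a<0$, $\Theta(0)=1/2$. *)

theory Defs
  imports "Jordan_Normal_Form.Matrix" "Jordan_Normal_Form.Char_Poly"
begin

text \<open>Operators on an n-dimensional Hilbert space C^n are n x n complex matrices.\<close>

definition adj :: "complex mat \<Rightarrow> complex mat" where
  "adj A = mat (dim_col A) (dim_row A) (\<lambda>(i,j). cnj (A $$ (j,i)))"

definition hermitian :: "nat \<Rightarrow> complex mat \<Rightarrow> bool" where
  "hermitian n A \<longleftrightarrow> A \<in> carrier_mat n n \<and> adj A = A"

definition mtrace :: "complex mat \<Rightarrow> complex" where
  "mtrace A = (\<Sum>i<dim_row A. A $$ (i,i))"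

definition density_op :: "nat \<Rightarrow> complex mat \<Rightarrow> bool" where
  "density_op n \<rho> \<longleftrightarrow> hermitian n \<rho>
     \<and> (\<forall>v \<in> carrier_vec n. 0 \<le> Re (conjugate v \<bullet> (\<rho> *\<^sub>v v)))
     \<and> mtrace \<rho> = 1"

definition mexp :: "complex mat \<Rightarrow> complex mat" where
  "mexp M = mat (dim_row M) (dim_col M)
      (\<lambda>(i,j). (\<Sum>k. (M ^\<^sub>m k) $$ (i,j) / of_nat (fact k)))"

definition heis :: "real \<Rightarrow> complex mat \<Rightarrow> complex mat \<Rightarrow> real \<Rightarrow> complex mat" where
  "heis hbar H A t =
     mexp ((\<i> * complex_of_real (t / hbar)) \<cdot>\<^sub>m H) * A * mexp ((- \<i> * complex_of_real (t / hbar)) \<cdot>\<^sub>m H)"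

definition theta :: "real \<Rightarrow> real" where
  "theta a = (if a > 0 then 1 else if a < 0 then 0 else 1/2)"

text \<open>Spectral function Theta(A) of a Hermitian A: the operator acting on each
  eigenvector of A with eigenvalue lambda as multiplication by theta(lambda).
  (Hermitian matrices are diagonalizable, so this determines it uniquely.)\<close>
definition Theta :: "complex mat \<Rightarrow> complex mat" where
  "Theta A = (THE P. P \<in> carrier_mat (dim_row A) (dim_row A) \<and>
      (\<forall>v c. eigenvector A v c \<longrightarrow> P *\<^sub>v v = complex_of_real (theta (Re c)) \<cdot>\<^sub>v v))"

end

theory Submission
  imports Defs "Jordan_Normal_Form.Jordan_Normal_Form_Existence" "Jordan_Normal_Form.Jordan_Normal_Form_Uniqueness"
begin

(* Diagonalise H = P diag(E) Q and measure energies in units of hbar*omega, level l = E_l / (hbar*omega).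
   In this eigenbasis the Heisenberg picture multiplies the (l,m) entry of an operator by
   e^(i omega t (level l - level m)); hence the rotation law for X forces every nonzero entry of X to
   join two levels at distance exactly 1.  Since X(pi/omega) = -X and Theta(-X) = 1 - Theta(X), the
   entries S_lm of Theta(X) satisfy e^(i pi (level l - level m)) S_lm = delta_lm - S_lm: the diagonal
   is 1/2 and off-diagonal entries join levels at odd distance.  Theta(X) commutes with every diagonal
   matrix commuting with X; with at most three levels, the 1-neighbourhood of a level is closed under
   the unit steps of X whenever some level lies further than 2 away, so nonzero off-diagonal entries
   of Theta(X) join levels at distance 1 as well.  At the times 2 pi k / (3 omega) such an entry is
   multiplied by the cube roots of unity, which sum to 0, so the three operators Theta(X(t_k)) add up
   to 3/2 times the identity. *)

section \<open>Matrix algebra\<close>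

lemma assoc_mult_mat_dims:
  fixes A :: "'a :: semiring_0 mat"
  assumes "dim_col A = dim_row B" "dim_col B = dim_row C"
  shows "A * B * C = A * (B * C)"
proof (rule assoc_mult_mat)
  show "A \<in> carrier_mat (dim_row A) (dim_col A)" unfolding carrier_mat_def by blast
  show "B \<in> carrier_mat (dim_col A) (dim_col B)" using assms(1) unfolding carrier_mat_def by simp
  show "C \<in> carrier_mat (dim_col B) (dim_col C)" using assms(2) unfolding carrier_mat_def by simp
qed

lemma dim_mat_diag [simp]: "dim_row (mat_diag n d) = n" "dim_col (mat_diag n d) = n"
  unfolding mat_diag_def by auto

lemma mat_diag_mult_vec_index:
  assumes "w \<in> carrier_vec n" "i < n"
  shows "(mat_diag n f *\<^sub>v w) $ i = f i * (w $ i :: 'a :: semiring_1)"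
proof -
  have "(if i = j then f j else 0) * w $ j = (if i = j then f i * w $ i else 0)" for j
    by simp
  then show ?thesis using assms by (simp add: mat_diag_def scalar_prod_def)
qed

lemma mat_diag_pow: "mat_diag n f ^\<^sub>m k = mat_diag n (\<lambda>i. f i ^ k)"
proof (induction k)
  case 0
  show ?case by (simp flip: mat_diag_one)
next
  case (Suc k)
  then show ?case by (simp add: power_commutes)
qed

lemma mat_diag_sandwich_index:
  assumes "P \<in> carrier_mat m n" "Q \<in> carrier_mat n m'" "i < m" "j < m'"
  shows "(P * mat_diag n g * Q) $$ (i, j) = (\<Sum>l<n. P $$ (i, l) * g l * Q $$ (l, j))"
  using assms by (simp add: mat_diag_mult_right[OF assms(1)] scalar_prod_def atLeast0LessThan)

lemma sandwich_index:
  assumes "A \<in> carrier_mat n n" "M \<in> carrier_mat n n" "B \<in> carrier_mat n n" "l < n" "m < n"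
  shows "(A * M * B) $$ (l, m) = (\<Sum>i<n. \<Sum>j<n. A $$ (l, i) * M $$ (i, j) * B $$ (j, m))"
  using assms by (simp add: scalar_prod_def atLeast0LessThan sum_distrib_left mult.assoc)

lemma mult_one_minus_mult:
  fixes A :: "'a :: ring_1 mat"
  assumes "A \<in> carrier_mat n n" "B \<in> carrier_mat n n" "C \<in> carrier_mat n n"
  shows "A * (1\<^sub>m n - B) * C = A * C - A * B * C"
proof -
  have "A * (1\<^sub>m n - B) = A - A * B"
    using mult_minus_distrib_mat[OF assms(1) one_carrier_mat assms(2)] assms(1) by simp
  then show ?thesis using minus_mult_distrib_mat[OF assms(1) mult_carrier_mat[OF assms(1,2)] assms(3)] by simp
qed

lemma similar_mat_wit_diagD:
  assumes "similar_mat_wit A (mat_diag n d) P Q"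
  shows "A \<in> carrier_mat n n" "P \<in> carrier_mat n n" "Q \<in> carrier_mat n n"
    and "P * Q = 1\<^sub>m n" "Q * P = 1\<^sub>m n" "A = P * mat_diag n d * Q"
proof -
  have "n = dim_row A"
    using carrier_matD(1)[OF similar_mat_witD(5)[OF refl assms]] by simp
  from similar_mat_witD[OF this assms] show "A \<in> carrier_mat n n" "P \<in> carrier_mat n n"
    "Q \<in> carrier_mat n n" "P * Q = 1\<^sub>m n" "Q * P = 1\<^sub>m n" "A = P * mat_diag n d * Q"
    by blast+
qed

lemma similar_diag_inverse:
  assumes "P \<in> carrier_mat n n" "Q \<in> carrier_mat n n" "P * Q = 1\<^sub>m n" "Q * P = 1\<^sub>m n"
    and "\<And>j. f j * g j = (1 :: 'a :: comm_ring_1)"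
  shows "(P * mat_diag n f * Q) * (P * mat_diag n g * Q) = 1\<^sub>m n"
proof -
  have "(P * mat_diag n f * Q) * (P * mat_diag n g * Q) = P * mat_diag n f * (Q * P) * mat_diag n g * Q"
    using assms(1,2) by (simp add: assoc_mult_mat_dims carrier_matD)
  also have "\<dots> = P * Q"
    using assms by (simp add: assoc_mult_mat_dims carrier_matD)
  finally show ?thesis using assms(3) by simp
qed

lemma mtrace_mult_index:
  assumes "A \<in> carrier_mat n m" "B \<in> carrier_mat m n"
  shows "mtrace (A * B) = (\<Sum>i<n. \<Sum>j<m. A $$ (i, j) * B $$ (j, i))"
  using assms unfolding mtrace_def by (simp add: scalar_prod_def atLeast0LessThan)

lemma mtrace_mult_comm:
  assumes "A \<in> carrier_mat n m" "B \<in> carrier_mat m n"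
  shows "mtrace (A * B) = mtrace (B * A)"
  unfolding mtrace_mult_index[OF assms] mtrace_mult_index[OF assms(2,1)]
  by (subst sum.swap) (simp add: mult.commute)

lemma mtrace_change_basis:
  assumes "P \<in> carrier_mat n n" "Q \<in> carrier_mat n n" "P * Q = 1\<^sub>m n"
    and "M \<in> carrier_mat n n" "R \<in> carrier_mat n n"
  shows "mtrace (M * R) = mtrace ((Q * M * P) * (Q * R * P))"
proof -
  have "(Q * M * P) * (Q * R * P) = Q * M * (P * Q) * R * P"
    using assms(1,2,4,5) by (simp add: assoc_mult_mat_dims carrier_matD)
  also have "\<dots> = Q * (M * R * P)"
    using assms by (simp add: assoc_mult_mat_dims carrier_matD)
  finally have "(Q * M * P) * (Q * R * P) = Q * (M * R * P)" .
  then have "mtrace ((Q * M * P) * (Q * R * P)) = mtrace (M * R * P * Q)"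
    using assms by (simp add: mtrace_mult_comm[of Q n n] assoc_mult_mat_dims carrier_matD)
  also have "\<dots> = mtrace (M * R)"
    using assms by (simp add: assoc_mult_mat_dims carrier_matD)
  finally show ?thesis ..
qed

lemma sum_mtrace_mult:
  assumes N: "\<And>k. k \<in> K \<Longrightarrow> N k \<in> carrier_mat n n" and R: "R \<in> carrier_mat n n"
    and sum: "\<And>l m. l < n \<Longrightarrow> m < n \<Longrightarrow> (\<Sum>k\<in>K. N k $$ (l, m)) = (if l = m then c else 0)"
  shows "(\<Sum>k\<in>K. mtrace (N k * R)) = c * mtrace R"
proof -
  have "(\<Sum>k\<in>K. mtrace (N k * R)) = (\<Sum>k\<in>K. \<Sum>l<n. \<Sum>m<n. N k $$ (l, m) * R $$ (m, l))"
    using N R by (intro sum.cong refl mtrace_mult_index)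
  also have "\<dots> = (\<Sum>l<n. \<Sum>m<n. \<Sum>k\<in>K. N k $$ (l, m) * R $$ (m, l))"
    by (subst sum.swap) (simp only: sum.swap[of _ K])
  also have "\<dots> = (\<Sum>l<n. \<Sum>m<n. (\<Sum>k\<in>K. N k $$ (l, m)) * R $$ (m, l))"
    by (simp add: sum_distrib_right)
  also have "\<dots> = c * mtrace R"
  proof -
    have "(if l = m then c else 0) * R $$ (m, l) = (if m = l then c * R $$ (l, l) else 0)" for l m
      by simp
    then show ?thesis using R by (simp add: sum mtrace_def sum_distrib_left)
  qed
  finally show ?thesis .
qed

section \<open>Hermitian matrices are diagonalizable\<close>

lemma hermitian_carrier: "hermitian n A \<Longrightarrow> A \<in> carrier_mat n n"
  unfolding hermitian_def by simp

lemma hermitian_index: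
  assumes "hermitian n A" "i < n" "j < n"
  shows "cnj (A $$ (i,j)) = A $$ (j,i)"
proof -
  have A: "A \<in> carrier_mat n n" and adj: "adj A = A" using assms(1) unfolding hermitian_def by auto
  have "adj A $$ (j,i) = cnj (A $$ (i,j))" using A assms(2,3) unfolding adj_def by auto
  then show ?thesis unfolding adj by simp
qed

lemma hermitian_inner_swap:
  assumes A: "hermitian n A" and v: "v \<in> carrier_vec n" and w: "w \<in> carrier_vec n"
  shows "conjugate (A *\<^sub>v v) \<bullet> w = conjugate v \<bullet> (A *\<^sub>v w)"
proof -
  have "conjugate (A *\<^sub>v v) \<bullet> w = (\<Sum>i<n. \<Sum>j<n. A $$ (j,i) * cnj (v $ j) * w $ i)"
    using hermitian_carrier[OF A] v w hermitian_index[OF A]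
    by (simp add: scalar_prod_def atLeast0LessThan sum_distrib_left sum_distrib_right ac_simps)
  also have "\<dots> = conjugate v \<bullet> (A *\<^sub>v w)"
    using hermitian_carrier[OF A] v w
    by (subst sum.swap) (simp add: scalar_prod_def atLeast0LessThan sum_distrib_left ac_simps)
  finally show ?thesis .
qed

lemma conjugate_sprod_self_eq_0_iff:
  fixes v :: "complex vec"
  assumes "v \<in> carrier_vec n"
  shows "conjugate v \<bullet> v = 0 \<longleftrightarrow> v = 0\<^sub>v n"
  using conjugate_square_eq_0_vec[OF assms] conjugate_vec_sprod_comm[OF assms assms] by metis

lemma hermitian_eigenvalue_real:
  assumes A: "hermitian n A" and ev: "eigenvector A v c"
  shows "Im c = 0"
proof -
  have v: "v \<in> carrier_vec n" "v \<noteq> 0\<^sub>v n" and Av: "A *\<^sub>v v = c \<cdot>\<^sub>v v"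
    using ev hermitian_carrier[OF A] unfolding eigenvector_def by auto
  have "cnj c * (conjugate v \<bullet> v) = c * (conjugate v \<bullet> v)"
    using hermitian_inner_swap[OF A v(1) v(1)] v(1) unfolding Av
    by (simp add: conjugate_smult_vec)
  then have "cnj c = c" using v conjugate_sprod_self_eq_0_iff by auto
  then show ?thesis by (metis Reals_cnj_iff complex_is_Real_iff)
qed

lemma hermitian_char_matrix:
  assumes "hermitian n A" "Im e = 0"
  shows "hermitian n (char_matrix A e)"
  using assms hermitian_carrier[OF assms(1)] hermitian_index[OF assms(1)] complex_eq_iff[of "cnj e" e]
  unfolding hermitian_def adj_def char_matrix_def by auto

lemma hermitian_mat_kernel_square:
  assumes C: "hermitian n C"
  shows "mat_kernel (C * C) = mat_kernel C"
proof -
  have Cc: "C \<in> carrier_mat n n" by (rule hermitian_carrier[OF C])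
  show ?thesis
  proof (intro equalityI subsetI)
    fix v assume "v \<in> mat_kernel (C * C)"
    then have v: "v \<in> carrier_vec n" and "C *\<^sub>v (C *\<^sub>v v) = 0\<^sub>v n"
      using Cc by (auto simp: mat_kernel_def assoc_mult_mat_vec[of C n n C n v])
    then have "conjugate (C *\<^sub>v v) \<bullet> (C *\<^sub>v v) = 0"
      using Cc by (simp add: hermitian_inner_swap[OF C])
    then show "v \<in> mat_kernel C"
      using v Cc conjugate_sprod_self_eq_0_iff[of "C *\<^sub>v v" n] by (simp add: mat_kernel_def)
  next
    fix v assume "v \<in> mat_kernel C"
    then show "v \<in> mat_kernel (C * C)"
      using Cc by (auto simp: mat_kernel_def assoc_mult_mat_vec[of C n n C n v] intro!: eq_vecI)
  qed
qed

lemma hermitian_jordan_block_size: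
  assumes A: "hermitian n A" and jnf: "jordan_nf A n_as" and block: "(k, e) \<in> set n_as"
  shows "k = 1"
proof -
  have Ac: "A \<in> carrier_mat n n" by (rule hermitian_carrier[OF A])
  have "k \<noteq> 0" using jnf block unfolding jordan_nf_def by force
  from block \<open>k \<noteq> 0\<close> jordan_nf_char_poly[OF jnf] have "poly (char_poly A) e = 0"
    by (force simp: poly_prod_list image_iff)
  then obtain v where "eigenvector A v e"
    using eigenvalue_root_char_poly[OF Ac] unfolding eigenvalue_def by blast
  then have C: "hermitian n (char_matrix A e)"
    by (intro hermitian_char_matrix[OF A] hermitian_eigenvalue_real[OF A])
  let ?ks = "map fst [(k', e')\<leftarrow>n_as. e' = e]"
  have "dim_gen_eigenspace A e 2 = dim_gen_eigenspace A e 1"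
    using hermitian_mat_kernel_square[OF C] Ac
    by (simp add: dim_gen_eigenspace_def kernel_dim_def numeral_2_eq_2)
  then have "(\<Sum>k'\<leftarrow>?ks. min 2 k') = (\<Sum>k'\<leftarrow>?ks. min 1 k')"
    unfolding dim_gen_eigenspace[OF jnf] .
  moreover have "min 2 k' = min 1 k' + (if 2 \<le> k' then 1 else 0)" for k' :: nat
    by auto
  ultimately have "(\<Sum>k'\<leftarrow>?ks. if 2 \<le> k' then 1 else 0 :: nat) = 0"
    by (simp only: sum_list_addf)
  then have "\<forall>x\<in>set (map (\<lambda>k'. if 2 \<le> k' then 1 else 0 :: nat) ?ks). x = 0"
    by (simp only: sum_list_eq_0_iff)
  moreover have "k \<in> set ?ks" using block by force
  ultimately have "\<not> 2 \<le> k" unfolding set_map by fastforce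
  then show ?thesis using \<open>k \<noteq> 0\<close> by linarith
qed

lemma jordan_matrix_all_ones: "jordan_matrix (map (Pair 1) es) = mat_diag (length es) (\<lambda>i. es ! i)"
proof (induction es)
  case Nil
  show ?case by (rule eq_matI) (auto simp: jordan_matrix_def mat_diag_def)
next
  case (Cons e es)
  have "sum_list (map fst (map (Pair 1) es)) = length es" by (induction es) auto
  then show ?case
    unfolding list.map(2) jordan_matrix_Cons Cons.IH
    by (intro eq_matI) (auto simp: mat_diag_def nth_Cons')
qed

definition diagonalizable :: "nat \<Rightarrow> 'a :: semiring_1 mat \<Rightarrow> bool" where
  "diagonalizable n A \<longleftrightarrow> (\<exists>P Q d. similar_mat_wit A (mat_diag n d) P Q)"

lemma hermitian_diagonalizable:
  assumes A: "hermitian n A"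
  shows "diagonalizable n A"
proof -
  have Ac: "A \<in> carrier_mat n n" by (rule hermitian_carrier[OF A])
  obtain es where "char_poly A = (\<Prod>e\<leftarrow>es. [:- e, 1:])"
    using char_poly_factorized[OF Ac] by blast
  then obtain n_as where jnf: "jordan_nf A n_as" using jordan_nf_exists[OF Ac] by blast
  have "map (Pair 1 \<circ> snd) n_as = n_as"
    using hermitian_jordan_block_size[OF A jnf] by (intro map_idI) auto
  then have J: "jordan_matrix n_as = mat_diag (length n_as) ((!) (map snd n_as))"
    using jordan_matrix_all_ones[of "map snd n_as"] by simp
  obtain P Q where wit: "similar_mat_wit A (jordan_matrix n_as) P Q"
    using jnf unfolding jordan_nf_def similar_mat_def by blast
  then have "length n_as = n"
    using similar_mat_witD2[OF Ac wit] J by (metis carrier_matD(1) mat_diag_dim)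
  then show ?thesis using wit J unfolding diagonalizable_def by auto
qed

lemma diagonalizable_carrier: "diagonalizable n A \<Longrightarrow> A \<in> carrier_mat n n"
  unfolding diagonalizable_def using similar_mat_wit_diagD(1) by blast

lemma diagonalizable_similar:
  assumes "diagonalizable n A" "similar_mat_wit B A G G'"
  shows "diagonalizable n B"
  using assms(1) similar_mat_wit_trans[OF assms(2)] unfolding diagonalizable_def by blast

section \<open>Functions of diagonalizable matrices\<close>

context
  fixes A P Q :: "complex mat" and n :: nat and d :: "nat \<Rightarrow> complex"
  assumes diag: "similar_mat_wit A (mat_diag n d) P Q"
begin

private lemmas wit = similar_mat_wit_diagD[OF diag]
private lemmas dims = carrier_matD[OF wit(1)] carrier_matD[OF wit(2)] carrier_matD[OF wit(3)]

lemma similar_diag_eigenvector_coord: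
  assumes ev: "eigenvector A v c" and i: "i < n" and nz: "(Q *\<^sub>v v) $ i \<noteq> 0"
  shows "d i = c"
proof -
  have v: "v \<in> carrier_vec n" and Av: "A *\<^sub>v v = c \<cdot>\<^sub>v v"
    using ev wit(1) unfolding eigenvector_def by auto
  have "Q * A = (Q * P) * mat_diag n d * Q"
    unfolding wit(6) using dims by (simp add: assoc_mult_mat_dims)
  then have QA: "Q * A = mat_diag n d * Q" using dims by (simp add: wit(5))
  have "mat_diag n d *\<^sub>v (Q *\<^sub>v v) = Q *\<^sub>v (A *\<^sub>v v)"
    using wit(1,3) v by (simp flip: assoc_mult_mat_vec[of _ n n] add: QA)
  also have "\<dots> = c \<cdot>\<^sub>v (Q *\<^sub>v v)"
    using wit(3) v by (simp add: Av mult_mat_vec)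
  finally have "(mat_diag n d *\<^sub>v (Q *\<^sub>v v)) $ i = (c \<cdot>\<^sub>v (Q *\<^sub>v v)) $ i" by simp
  moreover have w: "Q *\<^sub>v v \<in> carrier_vec n" using wit(3) v by simp
  ultimately have "d i * (Q *\<^sub>v v) $ i = c * (Q *\<^sub>v v) $ i"
    unfolding mat_diag_mult_vec_index[OF w i] using i carrier_vecD[OF w] by simp
  then show ?thesis using nz by simp
qed

lemma similar_diag_eigenvector:
  assumes j: "j < n"
  shows "eigenvector A (col P j) (d j)"
proof -
  have "A * P = P * mat_diag n d * (Q * P)"
    unfolding wit(6) using dims by (simp add: assoc_mult_mat_dims)
  then have AP: "A * P = P * mat_diag n d" using dims by (simp add: wit(5))
  have "A *\<^sub>v col P j = col (P * mat_diag n d) j"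
    unfolding AP[symmetric] by (rule col_mult2[OF wit(1,2) j, symmetric])
  also have "\<dots> = d j \<cdot>\<^sub>v col P j"
    using wit(2) j by (auto simp: mat_diag_mult_right[OF wit(2)])
  finally have Av: "A *\<^sub>v col P j = d j \<cdot>\<^sub>v col P j" .
  have "Q *\<^sub>v col P j = unit_vec n j"
    using wit(2,3) j by (simp flip: col_mult2 add: wit(5))
  moreover have "Q *\<^sub>v 0\<^sub>v n = 0\<^sub>v n" using wit(3) by (intro eq_vecI) auto
  ultimately have "col P j \<noteq> 0\<^sub>v n" using unit_vec_nonzero[OF j] by metis
  then show ?thesis using wit(1,2) Av unfolding eigenvector_def by auto
qed

lemma similar_diag_eigenvalue_iff: "eigenvalue A c \<longleftrightarrow> (\<exists>j<n. d j = c)"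
proof
  assume "eigenvalue A c"
  then obtain v where ev: "eigenvector A v c" unfolding eigenvalue_def by blast
  then have v: "v \<in> carrier_vec n" "v \<noteq> 0\<^sub>v n" using wit(1) unfolding eigenvector_def by auto
  have "P *\<^sub>v (Q *\<^sub>v v) = v" using wit(2,3) v(1) by (simp flip: assoc_mult_mat_vec add: wit(4))
  moreover have "P *\<^sub>v 0\<^sub>v n = 0\<^sub>v n" using wit(2) by (intro eq_vecI) auto
  ultimately have "Q *\<^sub>v v \<noteq> 0\<^sub>v n" using v(2) by metis
  have "\<exists>i<n. (Q *\<^sub>v v) $ i \<noteq> 0"
  proof (rule ccontr)
    assume "\<not> (\<exists>i<n. (Q *\<^sub>v v) $ i \<noteq> 0)"
    then have "Q *\<^sub>v v = 0\<^sub>v n" using wit(3) by (intro eq_vecI) auto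
    with \<open>Q *\<^sub>v v \<noteq> 0\<^sub>v n\<close> show False ..
  qed
  then show "\<exists>j<n. d j = c" using similar_diag_eigenvector_coord[OF ev] by blast
next
  assume "\<exists>j<n. d j = c"
  then show "eigenvalue A c" using similar_diag_eigenvector unfolding eigenvalue_def by blast
qed

lemma similar_diag_fun_eigenvector:
  assumes ev: "eigenvector A v c"
  shows "(P * mat_diag n (\<lambda>j. f (d j)) * Q) *\<^sub>v v = f c \<cdot>\<^sub>v v"
proof -
  have v: "v \<in> carrier_vec n" using ev wit(1) unfolding eigenvector_def by auto
  define w where "w = Q *\<^sub>v v"
  have w: "w \<in> carrier_vec n" unfolding w_def using wit(3) v by simp
  have "mat_diag n (\<lambda>j. f (d j)) *\<^sub>v w = f c \<cdot>\<^sub>v w"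
  proof (rule eq_vecI)
    fix i assume "i < dim_vec (f c \<cdot>\<^sub>v w)"
    then have i: "i < n" using w by simp
    show "(mat_diag n (\<lambda>j. f (d j)) *\<^sub>v w) $ i = (f c \<cdot>\<^sub>v w) $ i"
      using similar_diag_eigenvector_coord[OF ev i] w i
      unfolding mat_diag_mult_vec_index[OF w i] w_def[symmetric] by (cases "w $ i = 0") auto
  qed (use w in simp)
  have "(P * mat_diag n (\<lambda>j. f (d j)) * Q) *\<^sub>v v = P *\<^sub>v (mat_diag n (\<lambda>j. f (d j)) *\<^sub>v w)"
    unfolding w_def using wit(2,3) v by (simp add: assoc_mult_mat_vec[of _ n n _ n])
  also have "\<dots> = f c \<cdot>\<^sub>v (P *\<^sub>v w)"
    unfolding \<open>mat_diag n (\<lambda>j. f (d j)) *\<^sub>v w = f c \<cdot>\<^sub>v w\<close> by (rule mult_mat_vec[OF wit(2) w])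
  also have "P *\<^sub>v w = v" unfolding w_def using wit(2,3) v by (simp flip: assoc_mult_mat_vec add: wit(4))
  finally show ?thesis .
qed

lemma similar_diag_fun_unique:
  assumes T: "T \<in> carrier_mat n n"
    and cols: "\<And>j. j < n \<Longrightarrow> T *\<^sub>v col P j = f (d j) \<cdot>\<^sub>v col P j"
  shows "T = P * mat_diag n (\<lambda>j. f (d j)) * Q"
proof -
  have "T * P = P * mat_diag n (\<lambda>j. f (d j))"
  proof (rule eq_matI)
    fix i j assume "i < dim_row (P * mat_diag n (\<lambda>j. f (d j)))" "j < dim_col (P * mat_diag n (\<lambda>j. f (d j)))"
    then have i: "i < n" and j: "j < n" using wit(2) by auto
    have "(T * P) $$ (i, j) = (T *\<^sub>v col P j) $ i" using T wit(2) i j by simp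
    also have "\<dots> = f (d j) * P $$ (i, j)" unfolding cols[OF j] using wit(2) i j by simp
    finally show "(T * P) $$ (i, j) = (P * mat_diag n (\<lambda>j. f (d j))) $$ (i, j)"
      using i j by (simp add: mat_diag_mult_right[OF wit(2)])
  qed (use T wit(2) in auto)
  then have "T * (P * Q) = P * mat_diag n (\<lambda>j. f (d j)) * Q"
    using T dims by (simp add: assoc_mult_mat_dims carrier_matD flip: assoc_mult_mat_dims)
  then show ?thesis using T by (simp add: wit(4))
qed

lemma Theta_similar_diag:
  "Theta A = P * mat_diag n (\<lambda>j. complex_of_real (theta (Re (d j)))) * Q"
  unfolding Theta_def dims(1)
proof (rule the_equality)
  show "P * mat_diag n (\<lambda>j. complex_of_real (theta (Re (d j)))) * Q \<in> carrier_mat n n \<and>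
      (\<forall>v c. eigenvector A v c \<longrightarrow> P * mat_diag n (\<lambda>j. complex_of_real (theta (Re (d j)))) * Q *\<^sub>v v
         = complex_of_real (theta (Re c)) \<cdot>\<^sub>v v)"
    using wit(2,3) similar_diag_fun_eigenvector[where f = "\<lambda>c. complex_of_real (theta (Re c))"] by auto
next
  fix T assume "T \<in> carrier_mat n n \<and>
      (\<forall>v c. eigenvector A v c \<longrightarrow> T *\<^sub>v v = complex_of_real (theta (Re c)) \<cdot>\<^sub>v v)"
  then show "T = P * mat_diag n (\<lambda>j. complex_of_real (theta (Re (d j)))) * Q"
    using similar_diag_fun_unique[where f = "\<lambda>c. complex_of_real (theta (Re c))"] similar_diag_eigenvector
    by blast
qed

end

lemma exp_sums: "(\<lambda>k. z ^ k / fact k) sums exp (z :: 'a :: {real_normed_field, banach})"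
  using exp_converges[of z] by (simp add: scaleR_conv_of_real divide_inverse mult.commute)

lemma mexp_similar_diag:
  assumes diag: "similar_mat_wit A (mat_diag n d) P Q"
  shows "mexp (c \<cdot>\<^sub>m A) = P * mat_diag n (\<lambda>j. exp (c * d j)) * Q"
proof (rule eq_matI)
  note wit = similar_mat_wit_diagD[OF diag]
  have "c \<cdot>\<^sub>m mat_diag n d = mat_diag n (\<lambda>j. c * d j)" by (auto simp: mat_diag_def)
  then have "similar_mat_wit (c \<cdot>\<^sub>m A) (mat_diag n (\<lambda>j. c * d j)) P Q"
    using similar_mat_wit_smult[OF diag, of c] by simp
  then have pow: "(c \<cdot>\<^sub>m A) ^\<^sub>m k = P * mat_diag n (\<lambda>j. (c * d j) ^ k) * Q" for k
    by (simp add: similar_mat_wit_pow_id mat_diag_pow)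
  fix i j assume "i < dim_row (P * mat_diag n (\<lambda>j. exp (c * d j)) * Q)"
    "j < dim_col (P * mat_diag n (\<lambda>j. exp (c * d j)) * Q)"
  then have i: "i < n" and j: "j < n" using wit(2,3) by auto
  have "((c \<cdot>\<^sub>m A) ^\<^sub>m k) $$ (i, j) / fact k
      = (\<Sum>l<n. P $$ (i, l) * Q $$ (l, j) * ((c * d l) ^ k / fact k))" for k
    unfolding pow mat_diag_sandwich_index[OF wit(2,3) i j] by (simp add: sum_divide_distrib ac_simps)
  moreover have "(\<lambda>k. \<Sum>l<n. P $$ (i, l) * Q $$ (l, j) * ((c * d l) ^ k / fact k))
      sums (\<Sum>l<n. P $$ (i, l) * Q $$ (l, j) * exp (c * d l))"
    by (intro sums_sum sums_mult exp_sums)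
  ultimately show "mexp (c \<cdot>\<^sub>m A) $$ (i, j) = (P * mat_diag n (\<lambda>j. exp (c * d j)) * Q) $$ (i, j)"
    using wit(1) i j unfolding mexp_def mat_diag_sandwich_index[OF wit(2,3) i j]
    by (simp add: sums_iff ac_simps)
qed (use similar_mat_wit_diagD[OF diag] in \<open>simp_all add: mexp_def\<close>)

lemma Theta_carrier:
  assumes "diagonalizable n A"
  shows "Theta A \<in> carrier_mat n n"
proof -
  obtain P Q d where diag: "similar_mat_wit A (mat_diag n d) P Q"
    using assms unfolding diagonalizable_def by blast
  show ?thesis
    unfolding Theta_similar_diag[OF diag] using similar_mat_wit_diagD[OF diag] by auto
qed

lemma Theta_similar:
  assumes A: "diagonalizable n A" and sim: "similar_mat_wit B A G G'"
  shows "Theta B = G * Theta A * G'"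
proof -
  obtain P Q d where diag: "similar_mat_wit A (mat_diag n d) P Q"
    using A unfolding diagonalizable_def by blast
  have diagB: "similar_mat_wit B (mat_diag n d) (G * P) (Q * G')"
    by (rule similar_mat_wit_trans[OF sim diag])
  have "n = dim_row B" using similar_mat_wit_diagD(1)[OF diagB] by simp
  note G = similar_mat_witD(6,7)[OF this sim] and PQ = similar_mat_wit_diagD(2,3)[OF diag]
  have "Theta B = G * P * mat_diag n (\<lambda>j. complex_of_real (theta (Re (d j)))) * (Q * G')"
    by (rule Theta_similar_diag[OF diagB])
  also have "\<dots> = G * (P * mat_diag n (\<lambda>j. complex_of_real (theta (Re (d j)))) * Q) * G'"
    using G PQ by (simp add: assoc_mult_mat_dims carrier_matD)
  finally show ?thesis unfolding Theta_similar_diag[OF diag] .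
qed

lemma theta_uminus: "theta (- x) = 1 - theta x"
  unfolding theta_def by auto

lemma Theta_uminus:
  assumes "diagonalizable n A"
  shows "Theta (- A) = 1\<^sub>m n - Theta A"
proof -
  obtain P Q d where diag: "similar_mat_wit A (mat_diag n d) P Q"
    using assms unfolding diagonalizable_def by blast
  note D = similar_mat_wit_diagD[OF diag]
  let ?T = "mat_diag n (\<lambda>j. complex_of_real (theta (Re (d j))))"
  have "- A = P * mat_diag n (\<lambda>j. - d j) * Q"
    unfolding D(6) using D(2,3)
    by (intro eq_matI) (auto simp: mat_diag_sandwich_index sum_negf simp del: index_mult_mat(1))
  then have "similar_mat_wit (- A) (mat_diag n (\<lambda>j. - d j)) P Q"
    using D by (intro similar_mat_witI) auto
  then have "Theta (- A) = P * mat_diag n (\<lambda>j. 1 - complex_of_real (theta (Re (d j)))) * Q"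
    by (simp add: Theta_similar_diag theta_uminus)
  also have "mat_diag n (\<lambda>j. 1 - complex_of_real (theta (Re (d j)))) = 1\<^sub>m n - ?T"
    by (auto simp: mat_diag_def)
  also have "P * (1\<^sub>m n - ?T) * Q = P * Q - P * ?T * Q"
    by (rule mult_one_minus_mult[OF D(2) mat_diag_dim D(3)])
  finally show ?thesis unfolding D(4) Theta_similar_diag[OF diag] .
qed

lemma Theta_commute:
  assumes A: "diagonalizable n A"
    and G: "G \<in> carrier_mat n n" "G' \<in> carrier_mat n n" "G * G' = 1\<^sub>m n" "G' * G = 1\<^sub>m n"
    and comm: "G * A = A * G"
  shows "G * Theta A = Theta A * G"
proof -
  have Ac: "A \<in> carrier_mat n n" by (rule diagonalizable_carrier[OF A])
  have "G * A * G' = A"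
    unfolding comm using Ac G by (simp add: assoc_mult_mat_dims carrier_matD)
  then have "similar_mat_wit A A G G'" using Ac G by (intro similar_mat_witI) auto
  then have "Theta A = G * Theta A * G'" by (rule Theta_similar[OF A])
  then have "Theta A * G = G * Theta A * (G' * G)"
    using G Theta_carrier[OF A] by (metis assoc_mult_mat mult_carrier_mat)
  then show ?thesis using G Theta_carrier[OF A] by simp
qed

section \<open>The Heisenberg picture in an eigenbasis of the Hamiltonian\<close>

context
  fixes H P Q :: "complex mat" and n :: nat and E :: "nat \<Rightarrow> complex" and hbar t :: real
  assumes H_diag: "similar_mat_wit H (mat_diag n E) P Q"
begin

private lemmas eigenbasis = similar_mat_wit_diagD[OF H_diag]

lemma heis_similar:
  assumes A: "A \<in> carrier_mat n n"
  shows "similar_mat_wit (heis hbar H A t) A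
    (mexp ((\<i> * complex_of_real (t / hbar)) \<cdot>\<^sub>m H)) (mexp ((- \<i> * complex_of_real (t / hbar)) \<cdot>\<^sub>m H))"
proof -
  let ?c = "\<i> * complex_of_real (t / hbar)"
  have "P * mat_diag n (\<lambda>j. exp (?c * E j)) * Q * (P * mat_diag n (\<lambda>j. exp (- ?c * E j)) * Q) = 1\<^sub>m n"
    "P * mat_diag n (\<lambda>j. exp (- ?c * E j)) * Q * (P * mat_diag n (\<lambda>j. exp (?c * E j)) * Q) = 1\<^sub>m n"
    by (rule similar_diag_inverse[OF eigenbasis(2-5)], simp flip: exp_add)+
  then show ?thesis
    unfolding heis_def mexp_similar_diag[OF H_diag] using eigenbasis(2,3) A by (intro similar_mat_witI) auto
qed

lemma heis_in_eigenbasis: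
  assumes A: "A \<in> carrier_mat n n"
  shows "Q * heis hbar H A t * P = mat_diag n (\<lambda>j. exp (\<i> * complex_of_real (t / hbar) * E j)) * (Q * A * P)
    * mat_diag n (\<lambda>j. exp (- \<i> * complex_of_real (t / hbar) * E j))"
proof -
  let ?U = "mat_diag n (\<lambda>j. exp (\<i> * complex_of_real (t / hbar) * E j))"
    and ?U' = "mat_diag n (\<lambda>j. exp (- \<i> * complex_of_real (t / hbar) * E j))"
  have "Q * heis hbar H A t * P = (Q * P) * ?U * (Q * A * P) * ?U' * (Q * P)"
    unfolding heis_def mexp_similar_diag[OF H_diag] using eigenbasis(2,3) A
    by (simp add: assoc_mult_mat_dims carrier_matD)
  then show ?thesis using eigenbasis(2,3) A by (simp add: eigenbasis(5) carrier_matD)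
qed

lemma Theta_heis:
  assumes "diagonalizable n A"
  shows "Theta (heis hbar H A t) = heis hbar H (Theta A) t"
  using Theta_similar[OF assms heis_similar[OF diagonalizable_carrier[OF assms]]]
  unfolding heis_def by simp

end

lemma rotation_frequency:
  fixes r :: real and x y :: complex
  assumes rot: "\<And>s. cis (s * r) * x = complex_of_real (cos s) * x + complex_of_real (sin s) * y"
    and x: "x \<noteq> 0"
  shows "r = 1 \<or> r = -1"
proof -
  have cos_eq: "cos (s * r) = cos s" for s
  proof -
    have "(cis (s * r) + cis (- s * r)) * x = 2 * complex_of_real (cos s) * x"
      using rot[of s] rot[of "- s"] by (simp add: algebra_simps)
    moreover have "cis (s * r) + cis (- s * r) = 2 * cos (s * r)"
      by (simp add: complex_eq_iff)
    ultimately show ?thesis using x by simp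
  qed
  have "r \<noteq> 0" using cos_eq[of pi] by auto
  obtain k :: int where k: "2 * pi * r = real_of_int k * 2 * pi"
    using cos_one_2pi_int[of "2 * pi * r"] cos_eq[of "2 * pi"] by (auto simp: mult.commute)
  obtain m :: int where m: "2 * pi / r = real_of_int m * 2 * pi"
    using cos_one_2pi_int[of "2 * pi / r"] cos_eq[of "2 * pi / r"] \<open>r \<noteq> 0\<close> by auto
  have "r = k" using k by simp
  moreover have "k * m = 1"
    using m \<open>r \<noteq> 0\<close> unfolding \<open>r = k\<close> by (simp add: field_simps) (metis of_int_eq_1_iff of_int_mult)
  ultimately show ?thesis by (auto simp: zmult_eq_1_iff)
qed

lemma cis_pi_eq_minus_one:
  assumes "cis (pi * r) = -1"
  obtains k :: int where "r = 2 * k + 1"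
proof -
  have "cos (pi * r + pi) = 1"
    using arg_cong[OF assms, of Re] by (simp add: cos_add)
  then obtain k :: int where "pi * r + pi = real_of_int k * 2 * pi"
    using cos_one_2pi_int[of "pi * r + pi"] by blast
  then have "pi * (r - (2 * (k - 1) + 1)) = 0" by (simp add: algebra_simps)
  then have "r = 2 * (k - 1) + 1" by simp
  then show ?thesis using that by blast
qed

lemma sum_cis_thirds:
  assumes "r = 1 \<or> r = -1"
  shows "(\<Sum>k<3::nat. cis (2 * pi * k * r / 3)) = 0"
proof -
  let ?z = "cis (2 * pi * r / 3)"
  have "cis (2 * pi * k * r / 3) = ?z ^ k" for k :: nat
    by (simp add: DeMoivre mult.commute mult.left_commute)
  moreover have "?z ^ 3 = 1" using assms by (auto simp: DeMoivre complex_eq_iff)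
  moreover have "?z \<noteq> 1" using assms cos_120 by (auto simp: complex_eq_iff)
  ultimately show ?thesis by (simp add: geometric_sum)
qed

lemma unit_step_stays_near:
  fixes V :: "real set"
  assumes V: "finite V" "card V \<le> 3" and ab: "a \<in> V" "b \<in> V" "2 < \<bar>a - b\<bar>"
    and pq: "p \<in> V" "q \<in> V" "\<bar>p - q\<bar> = 1"
  shows "\<bar>p - a\<bar> \<le> 1 \<longleftrightarrow> \<bar>q - a\<bar> \<le> 1"
proof -
  have "\<bar>q - a\<bar> \<le> 1" if "p \<in> V" "q \<in> V" "\<bar>p - q\<bar> = 1" "\<bar>p - a\<bar> \<le> 1" for p q
  proof (rule ccontr)
    assume "\<not> \<bar>q - a\<bar> \<le> 1"
    with that ab(3) have "a \<noteq> p" "a \<noteq> q" "a \<noteq> b" "p \<noteq> q" "p \<noteq> b" "q \<noteq> b"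
      by linarith+
    then have "card {a, p, q, b} = 4" by simp
    moreover have "card {a, p, q, b} \<le> card V" using V ab that by (intro card_mono) auto
    ultimately show False using V by simp
  qed
  then show ?thesis using pq by (metis abs_minus_commute)
qed

section \<open>Observables rotating under the Heisenberg evolution\<close>

locale rotating_observable =
  fixes n :: nat and hbar \<omega> :: real and H X Y P Q :: "complex mat" and E :: "nat \<Rightarrow> complex"
  assumes H_diag: "similar_mat_wit H (mat_diag n E) P Q"
    and energies_real: "\<And>l. l < n \<Longrightarrow> Im (E l) = 0"
    and X_diag: "diagonalizable n X"
    and Y_carrier: "Y \<in> carrier_mat n n"
    and hbar_pos: "0 < hbar" and omega_pos: "0 < \<omega>"
    and rotation: "\<And>t. heis hbar H X t
      = complex_of_real (cos (\<omega> * t)) \<cdot>\<^sub>m X + complex_of_real (sin (\<omega> * t)) \<cdot>\<^sub>m Y"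
begin

definition level :: "nat \<Rightarrow> real" where
  "level l = Re (E l) / (hbar * \<omega>)"

lemmas eigenbasis = similar_mat_wit_diagD[OF H_diag]

lemma X_carrier: "X \<in> carrier_mat n n"
  by (rule diagonalizable_carrier[OF X_diag])

lemma heis_entry:
  assumes A: "A \<in> carrier_mat n n" and lm: "l < n" "m < n"
  shows "(Q * heis hbar H A t * P) $$ (l, m) = cis (\<omega> * t * (level l - level m)) * (Q * A * P) $$ (l, m)"
proof -
  let ?c = "\<i> * complex_of_real (t / hbar)" and ?c' = "- \<i> * complex_of_real (t / hbar)"
  have QAP: "Q * A * P \<in> carrier_mat n n" using A eigenbasis(2,3) by simp
  have "?c * E l + ?c' * E m = \<i> * complex_of_real (\<omega> * t * (level l - level m))"
    using energies_real[OF lm(1)] energies_real[OF lm(2)] hbar_pos omega_pos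
    by (simp add: level_def complex_eq_iff field_simps)
  then have phase: "exp (?c * E l) * exp (?c' * E m) = cis (\<omega> * t * (level l - level m))"
    by (simp only: exp_add[symmetric] cis_conv_exp)
  have "(Q * heis hbar H A t * P) $$ (l, m) = exp (?c * E l) * exp (?c' * E m) * (Q * A * P) $$ (l, m)"
    unfolding heis_in_eigenbasis[OF H_diag A] using QAP lm
    by (simp add: mat_diag_mult_left[OF QAP] mat_diag_mult_right[of _ n])
  then show ?thesis unfolding phase .
qed

lemma coupling_level_gap:
  assumes lm: "l < n" "m < n" and coupled: "(Q * X * P) $$ (l, m) \<noteq> 0"
  shows "level l - level m = 1 \<or> level l - level m = -1"
proof (rule rotation_frequency[OF _ coupled])
  fix s
  let ?a = "complex_of_real (cos s)" and ?b = "complex_of_real (sin s)"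
  have M: "?a \<cdot>\<^sub>m X + ?b \<cdot>\<^sub>m Y \<in> carrier_mat n n" using X_carrier Y_carrier by simp
  have "(Q * (?a \<cdot>\<^sub>m X + ?b \<cdot>\<^sub>m Y) * P) $$ (l, m) = ?a * (Q * X * P) $$ (l, m) + ?b * (Q * Y * P) $$ (l, m)"
    unfolding sandwich_index[OF eigenbasis(3) M eigenbasis(2) lm] sandwich_index[OF eigenbasis(3) X_carrier eigenbasis(2) lm]
      sandwich_index[OF eigenbasis(3) Y_carrier eigenbasis(2) lm]
    using X_carrier Y_carrier by (simp add: sum.distrib sum_distrib_left algebra_simps)
  moreover have "heis hbar H X (s / \<omega>) = ?a \<cdot>\<^sub>m X + ?b \<cdot>\<^sub>m Y"
    using rotation[of "s / \<omega>"] omega_pos by simp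
  ultimately show "cis (s * (level l - level m)) * (Q * X * P) $$ (l, m)
      = ?a * (Q * X * P) $$ (l, m) + ?b * (Q * Y * P) $$ (l, m)"
    using heis_entry[OF X_carrier lm, of "s / \<omega>"] omega_pos by simp
qed

lemma Theta_half_period:
  assumes lm: "l < n" "m < n"
  shows "cis (pi * (level l - level m)) * (Q * Theta X * P) $$ (l, m)
    = (if l = m then 1 else 0) - (Q * Theta X * P) $$ (l, m)"
proof -
  have T: "Theta X \<in> carrier_mat n n" by (rule Theta_carrier[OF X_diag])
  have "heis hbar H X (pi / \<omega>) = - X"
    using rotation[of "pi / \<omega>"] omega_pos X_carrier Y_carrier by auto
  then have "heis hbar H (Theta X) (pi / \<omega>) = 1\<^sub>m n - Theta X"
    using Theta_heis[OF H_diag X_diag] Theta_uminus[OF X_diag] by metis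
  then have "Q * heis hbar H (Theta X) (pi / \<omega>) * P = 1\<^sub>m n - Q * Theta X * P"
    using mult_one_minus_mult[OF eigenbasis(3) T eigenbasis(2)] by (simp add: eigenbasis(5))
  then show ?thesis
    using heis_entry[OF T lm, of "pi / \<omega>"] omega_pos lm carrier_matD[of "Q * Theta X * P" n n] eigenbasis(2,3) T
    by simp
qed

lemma Theta_diag_commute:
  fixes g :: "nat \<Rightarrow> complex"
  assumes g: "\<And>p q. p < n \<Longrightarrow> q < n \<Longrightarrow> (Q * X * P) $$ (p, q) \<noteq> 0 \<Longrightarrow> g p = g q"
    and g0: "\<And>p. g p \<noteq> 0"
    and lm: "l < n" "m < n" and nz: "(Q * Theta X * P) $$ (l, m) \<noteq> 0"
  shows "g l = g m"
proof -
  let ?X = "Q * X * P" and ?G = "mat_diag n g"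
  have X': "?X \<in> carrier_mat n n" using eigenbasis(2,3) X_carrier by simp
  have sim: "similar_mat_wit ?X X Q P"
    using eigenbasis X_carrier by (intro similar_mat_witI) auto
  have "g p * ?X $$ (p, q) = ?X $$ (p, q) * g q" if "p < n" "q < n" for p q
    using g[OF that] by (cases "?X $$ (p, q) = 0") auto
  then have "?G * ?X = ?X * ?G"
    by (auto simp: mat_diag_mult_left[OF X'] mat_diag_mult_right[OF X'])
  moreover have "?G * mat_diag n (\<lambda>p. inverse (g p)) = 1\<^sub>m n" "mat_diag n (\<lambda>p. inverse (g p)) * ?G = 1\<^sub>m n"
    using g0 by (simp_all flip: mat_diag_one)
  ultimately have "?G * Theta ?X = Theta ?X * ?G"
    using Theta_commute[OF diagonalizable_similar[OF X_diag sim] mat_diag_dim mat_diag_dim] by blast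
  moreover have "Theta ?X = Q * Theta X * P" by (rule Theta_similar[OF X_diag sim])
  moreover have S: "Q * Theta X * P \<in> carrier_mat n n" using eigenbasis(2,3) Theta_carrier[OF X_diag] by simp
  ultimately have "(?G * (Q * Theta X * P)) $$ (l, m) = ((Q * Theta X * P) * ?G) $$ (l, m)" by simp
  then have "g l * (Q * Theta X * P) $$ (l, m) = (Q * Theta X * P) $$ (l, m) * g m"
    using lm by (simp add: mat_diag_mult_left[OF S] mat_diag_mult_right[OF S])
  then show ?thesis using nz by simp
qed

end

locale three_level_rotating_observable = rotating_observable +
  assumes three_levels: "card (E ` {..<n}) \<le> 3"
begin

lemma card_levels: "card (level ` {..<n}) \<le> 3"
proof -
  have "level ` {..<n} = (\<lambda>c. Re c / (hbar * \<omega>)) ` E ` {..<n}"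
    by (auto simp: level_def image_image)
  then have "card (level ` {..<n}) \<le> card (E ` {..<n})"
    by (simp add: card_image_le)
  then show ?thesis using three_levels by simp
qed

lemma Theta_coupling_level_gap:
  assumes lm: "l < n" "m < n" "l \<noteq> m" and nz: "(Q * Theta X * P) $$ (l, m) \<noteq> 0"
  shows "level l - level m = 1 \<or> level l - level m = -1"
proof (rule ccontr)
  let ?S = "Q * Theta X * P" and ?r = "level l - level m"
  assume near: "\<not> (?r = 1 \<or> ?r = -1)"
  have "(cis (pi * ?r) + 1) * ?S $$ (l, m) = 0"
    using Theta_half_period[OF lm(1,2)] lm(3) by (simp add: algebra_simps)
  then have "cis (pi * ?r) = -1" using nz by (simp add: add_eq_0_iff2)
  then obtain k :: int where k: "?r = 2 * k + 1" by (rule cis_pi_eq_minus_one)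
  with near have "1 \<le> k \<or> k \<le> -2" by auto
  then have far: "2 < \<bar>?r\<bar>" unfolding k by linarith
  define g :: "nat \<Rightarrow> complex" where "g p = (if \<bar>level p - level l\<bar> \<le> 1 then 2 else 1)" for p
  have "g l = g m"
  proof (rule Theta_diag_commute[OF _ _ lm(1,2) nz])
    fix p q assume pq: "p < n" "q < n" "(Q * X * P) $$ (p, q) \<noteq> 0"
    then have "\<bar>level p - level q\<bar> = 1" using coupling_level_gap by fastforce
    then have "\<bar>level p - level l\<bar> \<le> 1 \<longleftrightarrow> \<bar>level q - level l\<bar> \<le> 1"
      using pq(1,2) lm(1,2) far
      by (intro unit_step_stays_near[OF finite_imageI[OF finite_lessThan] card_levels]) auto
    then show "g p = g q" unfolding g_def by simp
  qed (simp add: g_def)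
  moreover have "g l = 2" "g m = 1" using far by (simp_all add: g_def abs_minus_commute)
  ultimately show False by simp
qed

lemma Theta_average_entry:
  assumes lm: "l < n" "m < n"
  shows "(\<Sum>k<3::nat. (Q * Theta (heis hbar H X (2 * pi * k / (3 * \<omega>))) * P) $$ (l, m))
    = (if l = m then 3 / 2 else 0)"
proof -
  let ?S = "Q * Theta X * P" and ?r = "level l - level m"
  have T: "Theta X \<in> carrier_mat n n" by (rule Theta_carrier[OF X_diag])
  have "(Q * Theta (heis hbar H X (2 * pi * k / (3 * \<omega>))) * P) $$ (l, m) = cis (2 * pi * k * ?r / 3) * ?S $$ (l, m)"
    for k :: nat
  proof -
    have "\<omega> * (2 * pi * k / (3 * \<omega>)) * ?r = 2 * pi * k * ?r / 3" using omega_pos by simp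
    then show ?thesis using heis_entry[OF T lm] Theta_heis[OF H_diag X_diag] by metis
  qed
  then have sum: "(\<Sum>k<3::nat. (Q * Theta (heis hbar H X (2 * pi * k / (3 * \<omega>))) * P) $$ (l, m))
      = ?S $$ (l, m) * (\<Sum>k<3::nat. cis (2 * pi * k * ?r / 3))"
    by (simp add: sum_distrib_left mult.commute)
  show ?thesis
  proof (cases "l = m")
    case True
    then have "?S $$ (l, l) = 1 / 2" using Theta_half_period[OF lm(1) lm(1)] by (simp add: mult.commute)
    then show ?thesis unfolding sum using True by (simp add: mult.commute)
  next
    case False
    show ?thesis
    proof (cases "?S $$ (l, m) = 0")
      case nz: False
      then show ?thesis unfolding sum
        using sum_cis_thirds Theta_coupling_level_gap[OF lm False nz] False by simp
    qed (simp add: sum False)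
  qed
qed

lemma trace_Theta_average:
  assumes \<rho>: "\<rho> \<in> carrier_mat n n"
  shows "(\<Sum>k<3::nat. mtrace (Theta (heis hbar H X (2 * pi * k / (3 * \<omega>))) * \<rho>)) = 3 / 2 * mtrace \<rho>"
proof -
  let ?T = "\<lambda>k::nat. Theta (heis hbar H X (2 * pi * k / (3 * \<omega>)))"
  have T: "?T k \<in> carrier_mat n n" for k
    using diagonalizable_similar[OF X_diag heis_similar[OF H_diag X_carrier]] by (rule Theta_carrier)
  have "(\<Sum>k<3::nat. mtrace (?T k * \<rho>)) = (\<Sum>k<3::nat. mtrace ((Q * ?T k * P) * (Q * \<rho> * P)))"
    using mtrace_change_basis[OF eigenbasis(2,3,4) T \<rho>] by simp
  also have "\<dots> = 3 / 2 * mtrace (Q * \<rho> * P)"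
    using eigenbasis(2,3) T \<rho> Theta_average_entry by (intro sum_mtrace_mult) auto
  also have "mtrace (Q * \<rho> * P) = mtrace \<rho>"
    using mtrace_change_basis[OF eigenbasis(2,3,4) one_carrier_mat \<rho>] eigenbasis(2,3) \<rho>
    by (simp add: eigenbasis(5))
  finally show ?thesis .
qed

end

theorem mainTheorem3:
  fixes n :: nat and H X Y \<rho> :: "complex mat" and \<omega> hbar :: real
  assumes "hermitian n H" and "hermitian n X" and "hermitian n Y"
    and "card {c. eigenvalue H c} \<le> 3 \<or> n \<le> 3"
    and "\<omega> > 0" and "hbar > 0"
    and "\<forall>t::real. heis hbar H X t = complex_of_real (cos (\<omega> * t)) \<cdot>\<^sub>m X + complex_of_real (sin (\<omega> * t)) \<cdot>\<^sub>m Y"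
    and "\<forall>t::real. heis hbar H Y t = complex_of_real (cos (\<omega> * t)) \<cdot>\<^sub>m Y - complex_of_real (sin (\<omega> * t)) \<cdot>\<^sub>m X"
    and "density_op n \<rho>"
  shows "(1/3) * (\<Sum>k<3::nat. mtrace (Theta (heis hbar H X (2 * pi * real k / (3 * \<omega>))) * \<rho>)) = 1/2"
proof -
  obtain P Q E where H: "similar_mat_wit H (mat_diag n E) P Q"
    using hermitian_diagonalizable[OF assms(1)] unfolding diagonalizable_def by blast
  have "E ` {..<n} = {c. eigenvalue H c}"
    using similar_diag_eigenvalue_iff[OF H] by auto
  moreover have "card (E ` {..<n}) \<le> n"
    using card_image_le[of "{..<n}" E] by simp
  ultimately have "card (E ` {..<n}) \<le> 3" using assms(4) by auto
  moreover have "Im (E l) = 0" if "l < n" for l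
    using hermitian_eigenvalue_real[OF assms(1) similar_diag_eigenvector[OF H that]] .
  ultimately interpret three_level_rotating_observable n hbar \<omega> H X Y P Q E
    using H hermitian_diagonalizable[OF assms(2)] hermitian_carrier[OF assms(3)] assms(5-7)
    by unfold_locales auto
  have "\<rho> \<in> carrier_mat n n" "mtrace \<rho> = 1"
    using assms(9) unfolding density_op_def hermitian_def by auto
  then show ?thesis using trace_Theta_average by simp
qed

end
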